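(* Let $\mathcal{A}$ be a fixed (non-random) countable partition of $\Theta$ into measurable sets, and let $(\theta_1,\mathbf{X}_1),\dots,(\theta_B,\mathbf{X}_B),(\theta,\mathbf{X})$ be i.i.d. pairs with $\theta_b \sim r$ and $\mathbf{X}_b\mid\theta_b$ distributed according to the statistical model at $\theta_b$. For $\theta' \in \Theta$ let $A(\theta')$ be the element of $\mathcal{A}$ containing $\theta'$, $I_{A(\theta')} = \{b : \theta_b \in A(\theta')\}$, $$\widehat H_B(t\mid\theta') = \frac{1}{|I_{A(\theta')}|+1}\Big(\sum_{b\in I_{A(\theta')}} \mathbb{I}\big(\tau(\mathbf{X}_b,\theta_b)\le t\big)+1\Big),$$ $\widehat C_{\theta',B} = \inf\{t : \widehat H_B(t\mid\theta') \ge \alpha\}$, and $\widehat R_B(\mathbf{X}) = \{\theta' \in\Theta : \tau(\mathbf{X},\theta') \ge \widehat C_{\theta',B}\}$. Then $\mathbb{P}(\theta \in \widehat R_B(\mathbf{X})) \ge 1-\alpha$.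
   Context: A statistical model gives, for each parameter $\theta\in\Theta$, a distribution of the data $\mathbf{X}\in\mathcal{X}$; $r$ is a reference probability distribution on $\Theta$; $\alpha\in(0,1)$. A fixed measurable function $\tau:\mathcal{X}\times\Theta\to\mathbb{R}$ (a test statistic) is given, and for every $\theta$ the conditional distribution of $\tau(\mathbf{X},\theta)$ given $\theta$ is continuous (has no atoms). *)

theory Defs
  imports "HOL-Probability.Probability"
begin

definition countable_partition :: "'a measure \<Rightarrow> 'a set set \<Rightarrow> bool" where
  "countable_partition R P \<longleftrightarrow> countable P \<and> P \<subseteq> sets R \<and> {} \<notin> P \<and> disjoint P \<and> \<Union>P = space R"

definition cell :: "'a set set \<Rightarrow> 'a \<Rightarrow> 'a set" where
  "cell P th = (THE A. A \<in> P \<and> th \<in> A)"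

definition joint_law :: "'a measure \<Rightarrow> 'x measure \<Rightarrow> ('a \<Rightarrow> 'x measure) \<Rightarrow> ('a \<times> 'x) measure" where
  "joint_law r X K = r \<bind> (\<lambda>th. distr (K th) (r \<Otimes>\<^sub>M X) (\<lambda>x. (th, x)))"

definition idx_set :: "'a set set \<Rightarrow> nat \<Rightarrow> (nat \<Rightarrow> 'a \<times> 'x) \<Rightarrow> 'a \<Rightarrow> nat set" where
  "idx_set P B D th' = {b \<in> {..<B}. fst (D b) \<in> cell P th'}"

definition H_hat :: "'a set set \<Rightarrow> ('x \<Rightarrow> 'a \<Rightarrow> real) \<Rightarrow> nat \<Rightarrow> (nat \<Rightarrow> 'a \<times> 'x) \<Rightarrow> 'a \<Rightarrow> real \<Rightarrow> real" where
  "H_hat P \<tau> B D th' t =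
     (real (card {b \<in> idx_set P B D th'. \<tau> (snd (D b)) (fst (D b)) \<le> t}) + 1)
       / (real (card (idx_set P B D th')) + 1)"

text \<open>Critical value hat C = inf {t. hat H(t|th') >= alpha}, taken in the extended reals
  (it is -infinity when the set is unbounded below).\<close>
definition C_hat :: "'a set set \<Rightarrow> ('x \<Rightarrow> 'a \<Rightarrow> real) \<Rightarrow> real \<Rightarrow> nat \<Rightarrow> (nat \<Rightarrow> 'a \<times> 'x) \<Rightarrow> 'a \<Rightarrow> ereal" where
  "C_hat P \<tau> \<alpha> B D th' = Inf {ereal t | t. H_hat P \<tau> B D th' t \<ge> \<alpha>}"

definition R_hat :: "'a measure \<Rightarrow> 'a set set \<Rightarrow> ('x \<Rightarrow> 'a \<Rightarrow> real) \<Rightarrow> real \<Rightarrow> nat \<Rightarrow> (nat \<Rightarrow> 'a \<times> 'x) \<Rightarrow> 'x \<Rightarrow> 'a set" where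
  "R_hat r P \<tau> \<alpha> B D x = {th' \<in> space r. ereal (\<tau> x th') \<ge> C_hat P \<tau> \<alpha> B D th'}"

end

theory Submission
  imports Defs "HOL-Combinatorics.Transposition"
begin

(* Append the test pair (theta, X) to the calibration sample as item B. Then theta is not covered
   exactly when the score of item B ranks, within its partition cell, below an alpha-fraction of
   that cell. In any finite scored family at most an alpha-fraction of the items can fail in this
   way, because every failing item scores at most the highest-scoring failing one. The B + 1 pairs
   are i.i.d., so all items fail with the same probability, which is therefore at most alpha.
   Ties only help coverage. *)

lemma cell_eqI:
  assumes "countable_partition r P" "A \<in> P" "th \<in> A"
  shows "cell P th = A"
  unfolding cell_def
proof (rule the_equality)
  show "A \<in> P \<and> th \<in> A" using assms(2,3) ..
  fix A' assume "A' \<in> P \<and> th \<in> A'"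
  with assms show "A' = A" unfolding countable_partition_def by (auto dest: disjointD)
qed

lemma
  assumes "countable_partition r P" "th \<in> space r"
  shows cell_in_partition: "cell P th \<in> P" and in_cell: "th \<in> cell P th"
proof -
  obtain A where "A \<in> P" "th \<in> A" using assms unfolding countable_partition_def by auto
  with cell_eqI[OF assms(1)] show "cell P th \<in> P" "th \<in> cell P th" by auto
qed

lemma mem_cell_iff:
  assumes "countable_partition r P" "th \<in> space r" "th' \<in> space r"
  shows "th' \<in> cell P th \<longleftrightarrow> cell P th' = cell P th"
  using cell_eqI[OF assms(1)] cell_in_partition[OF assms(1)] in_cell[OF assms(1)] assms(2,3) by metis

lemma measurable_cell:
  assumes part: "countable_partition r P"
  shows "cell P \<in> r \<rightarrow>\<^sub>M count_space P"
proof -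
  have "cell P -` {A} \<inter> space r = A" if "A \<in> P" for A
    using part that cell_eqI[OF part that] in_cell[OF part]
    unfolding countable_partition_def by blast
  moreover have "countable P" "P \<subseteq> sets r"
    using part unfolding countable_partition_def by auto
  ultimately show ?thesis
    using cell_in_partition[OF part] by (auto simp: measurable_count_space_eq_countable)
qed

definition rank_fails :: "real \<Rightarrow> 'i set \<Rightarrow> ('i \<Rightarrow> 'k) \<Rightarrow> ('i \<Rightarrow> real) \<Rightarrow> 'i \<Rightarrow> bool" where
  "rank_fails \<alpha> I c s i \<longleftrightarrow>
     real (card {j\<in>I. c j = c i \<and> s j \<le> s i}) < \<alpha> * real (card {j\<in>I. c j = c i})"

lemma card_low_rank_le:
  fixes s :: "'i \<Rightarrow> real"
  assumes fin: "finite G" and "0 \<le> \<alpha>"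
  shows "real (card {i\<in>G. real (card {j\<in>G. s j \<le> s i}) < \<alpha> * real (card G)}) \<le> \<alpha> * real (card G)"
    (is "real (card ?F) \<le> _")
proof (cases "?F = {}")
  case True
  then have "card ?F = 0" by (simp only: card.empty)
  with \<open>0 \<le> \<alpha>\<close> show ?thesis by simp
next
  case False
  have "finite ?F" using fin by simp
  then have "Max (s ` ?F) \<in> s ` ?F" using False by (intro Max_in) auto
  then obtain i0 where i0: "Max (s ` ?F) = s i0" "i0 \<in> ?F" by (rule imageE)
  have max: "s i \<le> s i0" if "i \<in> ?F" for i
    using \<open>finite ?F\<close> that unfolding i0(1)[symmetric] by simp
  \<comment> \<open>all failing items are counted in the rank of the highest-scoring one\<close>
  have "?F \<subseteq> {j\<in>G. s j \<le> s i0}" using max by auto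
  then have "card ?F \<le> card {j\<in>G. s j \<le> s i0}" using fin by (intro card_mono) auto
  with i0 show ?thesis by simp
qed

lemma card_rank_fails_le:
  fixes s :: "'i \<Rightarrow> real"
  assumes fin: "finite I" and "0 \<le> \<alpha>"
  shows "real (card {i\<in>I. rank_fails \<alpha> I c s i}) \<le> \<alpha> * real (card I)"
proof -
  define G where "G k = {i\<in>I. c i = k}" for k
  define F where "F k = {i\<in>G k. real (card {j\<in>G k. s j \<le> s i}) < \<alpha> * real (card (G k))}" for k
  have finG: "finite (G k)" for k using fin by (simp add: G_def)
  have "{i\<in>I. rank_fails \<alpha> I c s i} = (\<Union>k\<in>c ` I. F k)"
  proof -
    have "{j\<in>I. c j = c i \<and> s j \<le> s i} = {j\<in>G (c i). s j \<le> s i}" for i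
      by (auto simp: G_def)
    then show ?thesis by (auto simp: rank_fails_def F_def G_def)
  qed
  moreover have "card (\<Union>k\<in>c ` I. F k) = (\<Sum>k\<in>c ` I. card (F k))"
    using fin finG by (intro card_UN_disjoint) (auto simp: F_def G_def)
  ultimately have "real (card {i\<in>I. rank_fails \<alpha> I c s i}) = (\<Sum>k\<in>c ` I. real (card (F k)))"
    by simp
  also have "\<dots> \<le> (\<Sum>k\<in>c ` I. \<alpha> * real (card (G k)))"
    unfolding F_def by (intro sum_mono card_low_rank_le finG \<open>0 \<le> \<alpha>\<close>)
  also have "\<dots> = \<alpha> * real (card (\<Union>k\<in>c ` I. G k))"
    using fin finG by (subst card_UN_disjoint) (auto simp: sum_distrib_left G_def)
  also have "(\<Union>k\<in>c ` I. G k) = I" by (auto simp: G_def)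
  finally show ?thesis .
qed

lemma rank_fails_reindex:
  assumes \<pi>: "bij_betw \<pi> I I" and "i \<in> I"
    and "\<And>j. j \<in> I \<Longrightarrow> c' j = c (\<pi> j)" "\<And>j. j \<in> I \<Longrightarrow> s' j = s (\<pi> j)"
  shows "rank_fails \<alpha> I c' s' i \<longleftrightarrow> rank_fails \<alpha> I c s (\<pi> i)"
proof -
  have card_eq: "card {j\<in>I. R (\<pi> j)} = card {j\<in>I. R j}" for R
    by (rule bij_betw_same_card, rule bij_betw_Collect[OF \<pi>]) simp
  have "{j\<in>I. c' j = c' i \<and> s' j \<le> s' i} = {j\<in>I. c (\<pi> j) = c (\<pi> i) \<and> s (\<pi> j) \<le> s (\<pi> i)}"
    "{j\<in>I. c' j = c' i} = {j\<in>I. c (\<pi> j) = c (\<pi> i)}"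
    using assms(2-4) by auto
  then show ?thesis
    unfolding rank_fails_def
    using card_eq[of "\<lambda>j. c j = c (\<pi> i) \<and> s j \<le> s (\<pi> i)"] card_eq[of "\<lambda>j. c j = c (\<pi> i)"]
    by simp
qed

lemma Inf_ereal_le_iff:
  fixes H :: "real \<Rightarrow> real"
  assumes "v < m" and "\<And>t. t < m \<Longrightarrow> H t \<le> H v"
  shows "Inf {ereal t | t. \<alpha> \<le> H t} \<le> ereal v \<longleftrightarrow> \<alpha> \<le> H v"
proof
  assume "\<alpha> \<le> H v"
  then show "Inf {ereal t | t. \<alpha> \<le> H t} \<le> ereal v" by (intro Inf_lower) auto
next
  assume Inf_le: "Inf {ereal t | t. \<alpha> \<le> H t} \<le> ereal v"
  show "\<alpha> \<le> H v"
  proof (rule ccontr)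
    assume "\<not> \<alpha> \<le> H v"
    then have "m \<le> t" if "\<alpha> \<le> H t" for t
      using assms(2)[of t] that by linarith
    then have "ereal m \<le> Inf {ereal t | t. \<alpha> \<le> H t}"
      by (intro Inf_greatest) auto
    with Inf_le have "m \<le> v" using order_trans ereal_less_eq(3) by blast
    with assms(1) show False by simp
  qed
qed

lemma card_sublevel_right_constant:
  fixes s :: "'b \<Rightarrow> real"
  assumes "finite S"
  obtains m where "v < m" "\<And>t. t < m \<Longrightarrow> card {b\<in>S. s b \<le> t} \<le> card {b\<in>S. s b \<le> v}"
proof
  define m where "m = Min (insert (v + 1) (s ` {b\<in>S. v < s b}))"
  show "v < m" using assms by (simp add: m_def)
  fix t assume "t < m"
  then have "{b\<in>S. s b \<le> t} \<subseteq> {b\<in>S. s b \<le> v}"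
    using assms by (auto simp: m_def not_le)
  then show "card {b\<in>S. s b \<le> t} \<le> card {b\<in>S. s b \<le> v}"
    using assms by (intro card_mono) auto
qed

lemma C_hat_le_iff_not_rank_fails:
  fixes D :: "nat \<Rightarrow> 'a \<times> 'x" and x :: 'x
  assumes part: "countable_partition r P" and th: "th \<in> space r"
    and D: "\<And>b. b < B \<Longrightarrow> fst (D b) \<in> space r"
  defines "\<omega> \<equiv> D(B := (th, x))"
  shows "C_hat P \<tau> \<alpha> B D th \<le> ereal (\<tau> x th) \<longleftrightarrow>
    \<not> rank_fails \<alpha> (insert B {..<B}) (cell P \<circ> fst \<circ> \<omega>) ((\<lambda>(t, y). \<tau> y t) \<circ> \<omega>) B"
proof -
  define S where "S = idx_set P B D th"
  define score where "score b = \<tau> (snd (D b)) (fst (D b))" for b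
  have "finite S" by (simp add: S_def idx_set_def)
  have "B \<notin> S" by (simp add: S_def idx_set_def)
  obtain m where "\<tau> x th < m" and m: "\<And>t. t < m \<Longrightarrow> card {b\<in>S. score b \<le> t} \<le> card {b\<in>S. score b \<le> \<tau> x th}"
    using card_sublevel_right_constant[OF \<open>finite S\<close>] by blast
  have "C_hat P \<tau> \<alpha> B D th \<le> ereal (\<tau> x th) \<longleftrightarrow> \<alpha> \<le> H_hat P \<tau> B D th (\<tau> x th)"
    unfolding C_hat_def
  proof (rule Inf_ereal_le_iff[OF \<open>\<tau> x th < m\<close>])
    fix t assume "t < m"
    then show "H_hat P \<tau> B D th t \<le> H_hat P \<tau> B D th (\<tau> x th)"
      using m[of t] by (auto simp: H_hat_def S_def score_def intro!: divide_right_mono)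
  qed
  also have "\<dots> \<longleftrightarrow> \<not> real (Suc (card {b\<in>S. score b \<le> \<tau> x th})) < \<alpha> * real (Suc (card S))"
    by (simp add: H_hat_def S_def score_def pos_le_divide_eq add.commute not_less)
  also have "\<dots> \<longleftrightarrow> \<not> rank_fails \<alpha> (insert B {..<B}) (cell P \<circ> fst \<circ> \<omega>) ((\<lambda>(t, y). \<tau> y t) \<circ> \<omega>) B"
  proof -
    have same_cell: "cell P (fst (D b)) = cell P th \<longleftrightarrow> fst (D b) \<in> cell P th" if "b < B" for b
      using mem_cell_iff[OF part th D[OF that]] by simp
    have "{j\<in>insert B {..<B}. cell P (fst (\<omega> j)) = cell P (fst (\<omega> B))} = insert B S"
      using same_cell by (auto simp: \<omega>_def S_def idx_set_def)
    moreover have "{j\<in>insert B {..<B}. cell P (fst (\<omega> j)) = cell P (fst (\<omega> B)) \<and>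
        \<tau> (snd (\<omega> j)) (fst (\<omega> j)) \<le> \<tau> (snd (\<omega> B)) (fst (\<omega> B))}
      = insert B {b\<in>S. score b \<le> \<tau> x th}"
      using same_cell by (auto simp: \<omega>_def S_def idx_set_def score_def)
    ultimately show ?thesis
      using \<open>finite S\<close> \<open>B \<notin> S\<close> by (simp add: rank_fails_def case_prod_beta)
  qed
  finally show ?thesis .
qed

lemma pred_rank_fails:
  fixes c :: "'b \<Rightarrow> 'k" and s :: "'b \<Rightarrow> real"
  assumes "finite I" "i \<in> I" "countable C"
    and c: "c \<in> M \<rightarrow>\<^sub>M count_space C" and s: "s \<in> borel_measurable M"
  shows "Measurable.pred (\<Pi>\<^sub>M j\<in>I. M) (\<lambda>\<omega>. rank_fails \<alpha> I (c \<circ> \<omega>) (s \<circ> \<omega>) i)"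
proof -
  have [measurable]: "Measurable.pred (\<Pi>\<^sub>M j\<in>I. M) (\<lambda>\<omega>. c (\<omega> j) = k)"
      "Measurable.pred (\<Pi>\<^sub>M j\<in>I. M) (\<lambda>\<omega>. s (\<omega> j) \<le> s (\<omega> i))" if "j \<in> I" for j k
  proof -
    have "(\<lambda>\<omega>. c (\<omega> j)) \<in> (\<Pi>\<^sub>M j\<in>I. M) \<rightarrow>\<^sub>M count_space C"
      using measurable_component_singleton[OF that] c by (rule measurable_compose)
    then show "Measurable.pred (\<Pi>\<^sub>M j\<in>I. M) (\<lambda>\<omega>. c (\<omega> j) = k)"
      by (rule pred_eq_const1) simp
    have "(\<lambda>\<omega>. s (\<omega> l)) \<in> borel_measurable (\<Pi>\<^sub>M j\<in>I. M)" if "l \<in> I" for l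
      using measurable_component_singleton[OF that] s by (rule measurable_compose)
    then show "Measurable.pred (\<Pi>\<^sub>M j\<in>I. M) (\<lambda>\<omega>. s (\<omega> j) \<le> s (\<omega> i))"
      unfolding pred_def using that \<open>i \<in> I\<close> by (intro borel_measurable_le)
  qed
  have card_sum: "real (card {j\<in>I. Q j}) = (\<Sum>j\<in>I. if Q j then 1 else 0)" for Q
    using \<open>finite I\<close> sum.inter_filter[of I "\<lambda>_. 1::real" Q] by simp
  have "Measurable.pred (\<Pi>\<^sub>M j\<in>I. M) (\<lambda>\<omega>.
      real (card {j\<in>I. c (\<omega> j) = k \<and> s (\<omega> j) \<le> s (\<omega> i)}) < \<alpha> * real (card {j\<in>I. c (\<omega> j) = k}))" for k
    unfolding card_sum using \<open>i \<in> I\<close> by measurable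
  then show ?thesis
    unfolding rank_fails_def comp_def
    by (rule measurable_compose_countable'[where g="\<lambda>\<omega>. c (\<omega> i)"]) (use assms in measurable)
qed

lemma (in prob_space) sum_prob_le_of_card_le:
  assumes "finite I" "\<And>i. i \<in> I \<Longrightarrow> E i \<in> events"
    and "\<And>x. x \<in> space M \<Longrightarrow> real (card {i\<in>I. x \<in> E i}) \<le> b"
  shows "(\<Sum>i\<in>I. prob (E i)) \<le> b"
proof -
  have integrable: "integrable M (indicator (E i) :: 'a \<Rightarrow> real)" if "i \<in> I" for i
    using assms(2)[OF that] by (simp add: emeasure_finite less_top[symmetric])
  then have "expectation (\<lambda>x. \<Sum>i\<in>I. indicator (E i) x :: real) = (\<Sum>i\<in>I. expectation (indicator (E i)))"
    by (rule Bochner_Integration.integral_sum)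
  then have "(\<Sum>i\<in>I. prob (E i)) = expectation (\<lambda>x. \<Sum>i\<in>I. indicator (E i) x :: real)"
    using assms(2) by (simp add: sets.Int_space_eq2)
  also have "\<dots> \<le> b"
  proof (rule integral_le_const)
    show "integrable M (\<lambda>x. \<Sum>i\<in>I. indicator (E i) x :: real)"
      using integrable by (rule Bochner_Integration.integrable_sum)
    have "(\<Sum>i\<in>I. indicator (E i) x :: real) = real (card {i\<in>I. x \<in> E i})" for x
      using \<open>finite I\<close> by (simp add: indicator_def Int_def)
    then show "AE x in M. (\<Sum>i\<in>I. indicator (E i) x :: real) \<le> b"
      using assms(3) by simp
  qed
  finally show ?thesis .
qed

lemma (in prob_space) prob_rank_fails_eq:
  fixes I :: "'i set" and c :: "'a \<Rightarrow> 'k" and s :: "'a \<Rightarrow> real"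
  assumes "finite I" "i \<in> I" "i' \<in> I" "countable C"
    and "c \<in> M \<rightarrow>\<^sub>M count_space C" "s \<in> borel_measurable M"
  shows "measure (\<Pi>\<^sub>M j\<in>I. M) {\<omega>\<in>space (\<Pi>\<^sub>M j\<in>I. M). rank_fails \<alpha> I (c \<circ> \<omega>) (s \<circ> \<omega>) i} =
         measure (\<Pi>\<^sub>M j\<in>I. M) {\<omega>\<in>space (\<Pi>\<^sub>M j\<in>I. M). rank_fails \<alpha> I (c \<circ> \<omega>) (s \<circ> \<omega>) i'}"
proof -
  let ?Q = "\<Pi>\<^sub>M j\<in>I. M"
  let ?E = "\<lambda>i. {\<omega>\<in>space ?Q. rank_fails \<alpha> I (c \<circ> \<omega>) (s \<circ> \<omega>) i}"
  define \<pi> where "\<pi> = Transposition.transpose i i'"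
  define h :: "('i \<Rightarrow> 'a) \<Rightarrow> 'i \<Rightarrow> 'a" where "h = (\<lambda>\<omega>. \<lambda>j\<in>I. \<omega> (\<pi> j))"
  have \<pi>: "bij_betw \<pi> I I" using assms(2,3) by (simp add: \<pi>_def)
  have h_distr: "distr ?Q ?Q h = ?Q"
    using distr_PiM_reindex[of I "\<lambda>_. M" \<pi> I] \<pi> prob_space_axioms
    by (simp add: h_def bij_betw_def bij_betw_imp_funcset)
  have h_meas: "h \<in> ?Q \<rightarrow>\<^sub>M ?Q"
    using \<pi> unfolding h_def by (intro measurable_restrict measurable_component_singleton)
      (auto dest: bij_betwE)
  have "h -` ?E i' \<inter> space ?Q = ?E i"
  proof -
    have "rank_fails \<alpha> I (c \<circ> h \<omega>) (s \<circ> h \<omega>) i' \<longleftrightarrow> rank_fails \<alpha> I (c \<circ> \<omega>) (s \<circ> \<omega>) i" for \<omega>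
      using rank_fails_reindex[OF \<pi> \<open>i' \<in> I\<close>, of "c \<circ> h \<omega>" "c \<circ> \<omega>" "s \<circ> h \<omega>" "s \<circ> \<omega>" \<alpha>]
      by (simp add: h_def \<pi>_def)
    then show ?thesis using measurable_space[OF h_meas] by auto
  qed
  moreover have "?E i' \<in> sets ?Q"
    using pred_rank_fails[OF assms(1,3,4-6)] by (simp add: pred_def)
  ultimately show ?thesis
    using measure_distr[OF h_meas, of "?E i'"] h_distr by simp
qed

lemma (in prob_space) prob_rank_fails_le:
  fixes c :: "'a \<Rightarrow> 'k" and s :: "'a \<Rightarrow> real"
  assumes "finite I" "i \<in> I" "0 \<le> \<alpha>" "countable C"
    and "c \<in> M \<rightarrow>\<^sub>M count_space C" "s \<in> borel_measurable M"
  shows "measure (\<Pi>\<^sub>M j\<in>I. M) {\<omega>\<in>space (\<Pi>\<^sub>M j\<in>I. M). rank_fails \<alpha> I (c \<circ> \<omega>) (s \<circ> \<omega>) i} \<le> \<alpha>"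
proof -
  let ?Q = "\<Pi>\<^sub>M j\<in>I. M"
  let ?E = "\<lambda>i. {\<omega>\<in>space ?Q. rank_fails \<alpha> I (c \<circ> \<omega>) (s \<circ> \<omega>) i}"
  interpret Q: prob_space ?Q by (rule prob_space_PiM) (rule prob_space_axioms)
  have "real (card I) * measure ?Q (?E i) = (\<Sum>i'\<in>I. measure ?Q (?E i'))"
    using prob_rank_fails_eq[OF assms(1) _ assms(2,4-6)] by simp
  also have "\<dots> \<le> \<alpha> * real (card I)"
  proof (rule Q.sum_prob_le_of_card_le)
    show "?E i' \<in> Q.events" if "i' \<in> I" for i'
      using pred_rank_fails[OF assms(1) that assms(4-6)] by (simp add: pred_def)
    show "real (card {i'\<in>I. \<omega> \<in> ?E i'}) \<le> \<alpha> * real (card I)" if "\<omega> \<in> space ?Q" for \<omega>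
      using card_rank_fails_le[OF assms(1,3), of "c \<circ> \<omega>" "s \<circ> \<omega>"] that by simp
  qed (fact assms(1))
  finally have "real (card I) * measure ?Q (?E i) \<le> real (card I) * \<alpha>"
    by (simp only: mult.commute)
  moreover have "0 < real (card I)"
    using assms(1,2) card_gt_0_iff by auto
  ultimately show ?thesis by simp
qed

lemma distr_PiM_fun_upd:
  assumes "prob_space M"
  shows "distr ((\<Pi>\<^sub>M j\<in>I. M) \<Otimes>\<^sub>M M) (\<Pi>\<^sub>M j\<in>insert i I. M) (\<lambda>(f, x). f(i := x)) =
    (\<Pi>\<^sub>M j\<in>insert i I. M)"
proof -
  interpret M: prob_space M by fact
  interpret PM: prob_space "\<Pi>\<^sub>M j\<in>I. M" by (rule prob_space_PiM) (rule assms)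
  interpret pair_prob_space "\<Pi>\<^sub>M j\<in>I. M" M ..
  have "distr ((\<Pi>\<^sub>M j\<in>I. M) \<Otimes>\<^sub>M M) (\<Pi>\<^sub>M j\<in>insert i I. M) (\<lambda>(f, x). f(i := x))
      = distr (M \<Otimes>\<^sub>M (\<Pi>\<^sub>M j\<in>I. M)) (\<Pi>\<^sub>M j\<in>insert i I. M) (\<lambda>(x, f). f(i := x))"
    by (subst distr_pair_swap) (simp add: distr_distr comp_def case_prod_unfold)
  also have "\<dots> = (\<Pi>\<^sub>M j\<in>insert i I. M)"
    using assms by (intro distr_pair_PiM_eq_PiM)
  finally show ?thesis .
qed

lemma
  assumes "prob_space r" "K \<in> r \<rightarrow>\<^sub>M prob_algebra X"
  shows prob_space_joint_law: "prob_space (joint_law r X K)"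
    and sets_joint_law: "sets (joint_law r X K) = sets (r \<Otimes>\<^sub>M X)"
proof -
  have r: "r \<in> space (prob_algebra r)"
    using assms(1) by (simp add: space_prob_algebra)
  have kernel: "(\<lambda>th. distr (K th) (r \<Otimes>\<^sub>M X) (\<lambda>x. (th, x))) \<in> r \<rightarrow>\<^sub>M prob_algebra (r \<Otimes>\<^sub>M X)"
    using assms(2) by measurable
  show "prob_space (joint_law r X K)"
    unfolding joint_law_def using r kernel by (rule prob_space_bind')
  show "sets (joint_law r X K) = sets (r \<Otimes>\<^sub>M X)"
    unfolding joint_law_def using r kernel by (rule sets_bind')
qed

lemma coverage_event_eq:
  fixes J :: "('a \<times> 'x) measure" and \<tau> :: "'x \<Rightarrow> 'a \<Rightarrow> real"
    and \<alpha> :: real and B :: nat and P :: "'a set set"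
  assumes part: "countable_partition r P" and fst_J: "fst ` space J \<subseteq> space r"
  defines "S \<equiv> (\<Pi>\<^sub>M b\<in>{..<B}. J) \<Otimes>\<^sub>M J" and "Q \<equiv> \<Pi>\<^sub>M j\<in>insert B {..<B}. J"
  defines "Fail \<equiv> {\<omega>\<in>space Q.
    rank_fails \<alpha> (insert B {..<B}) (cell P \<circ> fst \<circ> \<omega>) ((\<lambda>(t, y). \<tau> y t) \<circ> \<omega>) B}"
  shows "{(D, (th, x)) \<in> space S. th \<in> R_hat r P \<tau> \<alpha> B D x} =
    (\<lambda>(D, z). D(B := z)) -` (space Q - Fail) \<inter> space S"
proof (intro set_eqI)
  fix p :: "(nat \<Rightarrow> 'a \<times> 'x) \<times> 'a \<times> 'x"
  obtain D th x where p: "p = (D, (th, x))" by (cases p) auto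
  show "p \<in> {(D, (th, x)) \<in> space S. th \<in> R_hat r P \<tau> \<alpha> B D x} \<longleftrightarrow>
      p \<in> (\<lambda>(D, z). D(B := z)) -` (space Q - Fail) \<inter> space S"
  proof (cases "p \<in> space S")
    case True
    then have "D \<in> space (\<Pi>\<^sub>M b\<in>{..<B}. J)" "(th, x) \<in> space J"
      by (simp_all add: p S_def space_pair_measure)
    then have th: "th \<in> space r" and D: "\<And>b. b < B \<Longrightarrow> fst (D b) \<in> space r"
      using fst_J by (force, auto simp: space_PiM PiE_iff)
    have "(\<lambda>(f, z). f(B := z)) \<in> S \<rightarrow>\<^sub>M Q"
      unfolding S_def Q_def by (rule measurable_add_dim)
    from measurable_space[OF this True] have "D(B := (th, x)) \<in> space Q"
      by (simp add: p)
    then have "p \<in> (\<lambda>(D, z). D(B := z)) -` (space Q - Fail) \<inter> space S \<longleftrightarrow>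
        \<not> rank_fails \<alpha> (insert B {..<B}) (cell P \<circ> fst \<circ> D(B := (th, x)))
          ((\<lambda>(t, y). \<tau> y t) \<circ> D(B := (th, x))) B"
      using True by (simp add: p Fail_def)
    also have "\<dots> \<longleftrightarrow> C_hat P \<tau> \<alpha> B D th \<le> ereal (\<tau> x th)"
      using C_hat_le_iff_not_rank_fails[OF part th, of B D] D by simp
    also have "\<dots> \<longleftrightarrow> p \<in> {(D, (th, x)) \<in> space S. th \<in> R_hat r P \<tau> \<alpha> B D x}"
      using True th by (simp add: p R_hat_def)
    finally show ?thesis by (rule sym)
  next
    case False
    then show ?thesis by blast
  qed
qed

lemma prob_coverage_ge:
  fixes J :: "('a \<times> 'x) measure" and \<tau> :: "'x \<Rightarrow> 'a \<Rightarrow> real"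
  assumes "prob_space J" and part: "countable_partition r P" and fst_J: "fst ` space J \<subseteq> space r"
    and "cell P \<circ> fst \<in> J \<rightarrow>\<^sub>M count_space P" and "(\<lambda>(t, y). \<tau> y t) \<in> borel_measurable J"
    and "0 \<le> \<alpha>"
  shows "measure ((\<Pi>\<^sub>M b\<in>{..<B}. J) \<Otimes>\<^sub>M J)
      {(D, (th, x)) \<in> space ((\<Pi>\<^sub>M b\<in>{..<B}. J) \<Otimes>\<^sub>M J). th \<in> R_hat r P \<tau> \<alpha> B D x} \<ge> 1 - \<alpha>"
proof -
  interpret J: prob_space J by fact
  define Q where "Q = (\<Pi>\<^sub>M j\<in>insert B {..<B}. J)"
  define Fail where "Fail = {\<omega>\<in>space Q.
    rank_fails \<alpha> (insert B {..<B}) (cell P \<circ> fst \<circ> \<omega>) ((\<lambda>(t, y). \<tau> y t) \<circ> \<omega>) B}"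
  interpret Q: prob_space Q
    unfolding Q_def by (rule prob_space_PiM) (rule J.prob_space_axioms)
  have "countable P"
    using part by (simp add: countable_partition_def)
  then have "Fail \<in> sets Q" "measure Q Fail \<le> \<alpha>"
    using pred_rank_fails[of "insert B {..<B}" B P "cell P \<circ> fst" J _ \<alpha>]
      J.prob_rank_fails_le[of "insert B {..<B}" B \<alpha> P "cell P \<circ> fst"] assms(4-6)
    by (simp_all add: Fail_def Q_def pred_def)
  have "measure ((\<Pi>\<^sub>M b\<in>{..<B}. J) \<Otimes>\<^sub>M J) {(D, (th, x)) \<in> space ((\<Pi>\<^sub>M b\<in>{..<B}. J) \<Otimes>\<^sub>M J).
      th \<in> R_hat r P \<tau> \<alpha> B D x} =
    measure ((\<Pi>\<^sub>M b\<in>{..<B}. J) \<Otimes>\<^sub>M J)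
      ((\<lambda>(f, z). f(B := z)) -` (space Q - Fail) \<inter> space ((\<Pi>\<^sub>M b\<in>{..<B}. J) \<Otimes>\<^sub>M J))"
    unfolding Q_def Fail_def coverage_event_eq[OF part fst_J] ..
  also have "\<dots> = measure (distr ((\<Pi>\<^sub>M b\<in>{..<B}. J) \<Otimes>\<^sub>M J) Q (\<lambda>(f, z). f(B := z))) (space Q - Fail)"
    using \<open>Fail \<in> sets Q\<close> unfolding Q_def by (intro measure_distr[symmetric] measurable_add_dim) simp
  also have "\<dots> = measure Q (space Q - Fail)"
    unfolding Q_def by (simp only: distr_PiM_fun_upd[OF J.prob_space_axioms])
  also have "\<dots> = 1 - measure Q Fail"
    using \<open>Fail \<in> sets Q\<close> by (rule Q.prob_compl)
  finally show ?thesis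
    using \<open>measure Q Fail \<le> \<alpha>\<close> by simp
qed

theorem corollary1:
  fixes r :: "'a measure" and X :: "'x measure" and K :: "'a \<Rightarrow> 'x measure"
    and \<tau> :: "'x \<Rightarrow> 'a \<Rightarrow> real" and \<alpha> :: real and B :: nat and P :: "'a set set"
  assumes r_prob: "prob_space r"
    and K_kernel: "K \<in> r \<rightarrow>\<^sub>M prob_algebra X"
    and \<alpha>: "0 < \<alpha>" "\<alpha> < 1"
    and \<tau>_meas: "(\<lambda>(x, th). \<tau> x th) \<in> borel_measurable (X \<Otimes>\<^sub>M r)"
    and no_atoms: "\<And>th t. th \<in> space r \<Longrightarrow> emeasure (distr (K th) borel (\<lambda>x. \<tau> x th)) {t} = 0"
    and part: "countable_partition r P"
  shows "measure (PiM {..<B} (\<lambda>_. joint_law r X K) \<Otimes>\<^sub>M joint_law r X K)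
           {(D, (th, x)) \<in> space (PiM {..<B} (\<lambda>_. joint_law r X K) \<Otimes>\<^sub>M joint_law r X K).
              th \<in> R_hat r P \<tau> \<alpha> B D x} \<ge> 1 - \<alpha>"
proof (rule prob_coverage_ge[OF prob_space_joint_law[OF r_prob K_kernel] part])
  have sets_J: "sets (joint_law r X K) = sets (r \<Otimes>\<^sub>M X)"
    using r_prob K_kernel by (rule sets_joint_law)
  show "fst ` space (joint_law r X K) \<subseteq> space r"
    using sets_eq_imp_space_eq[OF sets_J] by (auto simp: space_pair_measure)
  show "cell P \<circ> fst \<in> joint_law r X K \<rightarrow>\<^sub>M count_space P"
    using measurable_cell[OF part] by (simp add: measurable_cong_sets[OF sets_J refl])
  show "(\<lambda>(t, y). \<tau> y t) \<in> borel_measurable (joint_law r X K)"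
    using \<tau>_meas by (simp add: measurable_cong_sets[OF sets_J refl]) measurable
qed (use \<alpha> in simp)

end
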